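(* Let $\xi$ be a transcendental real number. For every positive integer $k$, $$(k+1) \bigl( 1 + \lambda_{k+1} (\xi) \bigr) \ge k \bigl( 1 + \lambda_k (\xi) \bigr).$$ Consequently, for every integer $n \ge k$, $$\lambda_n (\xi) \ge \frac{k \lambda_k (\xi) - n + k}{n}.$$
   Context: For an integer $n \ge 1$ and a real number $\xi$, $\lambda_n(\xi)$ denotes the supremum (possibly $+\infty$) of the real numbers $\lambda$ such that, for arbitrarily large real numbers $X$, the inequalities $0 < |x_0| \le X$, $\max_{1 \le m \le n} |x_0 \xi^m - x_m| \le X^{-\lambda}$ have a solution in integers $x_0, \ldots, x_n$. The inequalities are understood in the extended reals (if $\lambda_k(\xi)=+\infty$ then the right-hand sides are $+\infty$). *)

theory Defs
  imports "HOL-Analysis.Analysis" "HOL-Computational_Algebra.Polynomial"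
begin

definition transcendental_real :: "real \<Rightarrow> bool" where
  "transcendental_real \<xi> \<longleftrightarrow>
     \<not> (\<exists>p :: int poly. p \<noteq> 0 \<and> poly (map_poly real_of_int p) \<xi> = 0)"

definition unif_lambda :: "nat \<Rightarrow> real \<Rightarrow> ereal" where
  "unif_lambda n \<xi> = Sup (ereal ` {lam :: real.
     \<forall>X0 :: real. \<exists>X \<ge> X0. X > 0 \<and>
       (\<exists>(x0 :: int) (x :: nat \<Rightarrow> int).
          0 < \<bar>x0\<bar> \<and> real_of_int \<bar>x0\<bar> \<le> X \<and>
          (\<forall>m \<in> {1..n}. \<bar>real_of_int x0 * \<xi> ^ m - real_of_int (x m)\<bar> \<le> X powr (- lam)))})"

end

theory Submission
  imports Defs
begin

(* Take an integer point (x_0, ..., x_k) of height X approximating (1, xi, ..., xi^k) with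
   error X^(-lambda). Siegel's lemma gives a nonzero integer relation sum d_i x_i = 0 with
   |d_i| <= B, where B is of order X^(1/k). For P = sum d_i t^i of degree D this makes x_0 P(xi)
   small, and multiplying by xi^(k+1-D) expresses d_D x_0 xi^(k+1) as an integer combination of
   the x_i up to a small error. This yields an approximation of (1, xi, ..., xi^(k+1)) of height
   BX with error of order B X^(-lambda), whence lambda_(k+1) >= (k lambda_k - 1)/(k+1), that is
   (k+1)(1 + lambda_(k+1)) >= k(1 + lambda_k). Iterating from k to n gives the bound on lambda_n. *)

lemma abs_sum_mult_le:
  fixes a b :: "'i \<Rightarrow> real" and A C :: real
  assumes "\<forall>i\<in>I. \<bar>a i\<bar> \<le> A" and "\<forall>i\<in>I. \<bar>b i\<bar> \<le> C"
  shows "\<bar>\<Sum>i\<in>I. a i * b i\<bar> \<le> card I * (A * C)"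
proof -
  have "\<bar>\<Sum>i\<in>I. a i * b i\<bar> \<le> (\<Sum>i\<in>I. \<bar>a i * b i\<bar>)"
    by (rule sum_abs)
  also have "\<dots> \<le> (\<Sum>i\<in>I. A * C)"
  proof (rule sum_mono)
    fix i assume "i \<in> I"
    then have "\<bar>a i\<bar> \<le> A" "\<bar>b i\<bar> \<le> C"
      using assms by auto
    then show "\<bar>a i * b i\<bar> \<le> A * C"
      unfolding abs_mult by (rule mult_mono') simp_all
  qed
  finally show ?thesis
    by simp
qed

lemma mult_add_one_less_power_Suc:
  fixes a B :: real
  assumes "0 \<le> a" and "1 \<le> B" and "a + 1 \<le> B ^ k"
  shows "a * B + 1 < (B + 1) ^ (k + 1)"
proof -
  have "a * B + 1 < (B + 1) * (a + 1)"
    using assms(1,2) by (simp add: algebra_simps)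
  also have "\<dots> \<le> (B + 1) * B ^ k"
    using assms by (intro mult_left_mono) auto
  also have "\<dots> \<le> (B + 1) * (B + 1) ^ k"
    using assms(2) by (intro mult_left_mono power_mono) auto
  finally show ?thesis by simp
qed

lemma card_box_gt_card_range:
  fixes k B :: nat and M :: real
  assumes "0 \<le> M" and "1 \<le> B" and "2 * (k + 1) * M + 1 \<le> real B ^ k"
  shows "card {-\<lfloor>(k + 1) * B * M\<rfloor>..\<lfloor>(k + 1) * B * M\<rfloor>} < card (\<Pi>\<^sub>E i\<in>{..k}. {0..B})"
proof -
  define N where "N = \<lfloor>(k + 1) * B * M\<rfloor>"
  have "N \<ge> 0"
    using assms(1) by (simp add: N_def)
  then have "real (card {-N..N}) = 2 * N + 1"
    by simp
  also have "\<dots> \<le> (2 * (k + 1) * M) * B + 1"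
    unfolding N_def by (simp add: algebra_simps) linarith
  also have "\<dots> < (real B + 1) ^ (k + 1)"
    using assms by (intro mult_add_one_less_power_Suc) auto
  also have "\<dots> = card (\<Pi>\<^sub>E i\<in>{..k}. {0..B})"
    by (simp add: card_PiE algebra_simps)
  finally show ?thesis
    by (simp add: N_def)
qed

lemma siegel_lemma:
  fixes z :: "nat \<Rightarrow> int" and k B :: nat and M :: real
  assumes "k \<ge> 1" and z_bound: "\<forall>i\<le>k. \<bar>z i\<bar> \<le> M"
    and height: "2 * (k + 1) * M + 1 \<le> real B ^ k"
  shows "\<exists>d :: nat \<Rightarrow> int. (\<exists>i\<le>k. d i \<noteq> 0) \<and> (\<forall>i\<le>k. \<bar>d i\<bar> \<le> B) \<and> (\<Sum>i\<le>k. d i * z i) = 0"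
proof -
  have M_nonneg: "0 \<le> M"
    using z_bound abs_ge_zero order_trans by (metis le0 of_int_0_le_iff)
  have B_pos: "1 \<le> B"
  proof (rule ccontr)
    assume "\<not> 1 \<le> B"
    then have "real B ^ k = 0"
      using \<open>k \<ge> 1\<close> by simp
    moreover have "0 \<le> 2 * (k + 1) * M"
      using M_nonneg by simp
    ultimately show False
      using height by linarith
  qed
  define A where "A = (\<Pi>\<^sub>E i\<in>{..k}. {0..B})"
  define f where "f c = (\<Sum>i\<le>k. int (c i) * z i)" for c
  define N where "N = \<lfloor>(k + 1) * B * M\<rfloor>"
  have f_range: "f ` A \<subseteq> {-N..N}"
  proof clarify
    fix c assume "c \<in> A"
    then have "\<forall>i\<in>{..k}. \<bar>real (c i)\<bar> \<le> B"
      by (auto simp: A_def)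
    then have "\<bar>\<Sum>i\<le>k. real (c i) * z i\<bar> \<le> (k + 1) * (B * M)"
      using abs_sum_mult_le[of "{..k}" "\<lambda>i. real (c i)" B "\<lambda>i. real_of_int (z i)" M] z_bound
      by simp
    then have "\<bar>f c\<bar> \<le> N"
      by (simp add: f_def N_def le_floor_iff algebra_simps)
    then show "f c \<in> {-N..N}"
      by auto
  qed
  have "card {-N..N} < card A"
    unfolding N_def A_def using M_nonneg B_pos height by (rule card_box_gt_card_range)
  then have "\<not> inj_on f A"
    using card_inj_on_le[OF _ f_range] by (metis finite_atLeastAtMost_int not_le)
  then obtain c c' where c: "c \<in> A" "c' \<in> A" "c \<noteq> c'" "f c = f c'"
    unfolding inj_on_def by blast
  define d where "d i = int (c i) - int (c' i)" for i
  have "\<exists>i\<le>k. c i \<noteq> c' i"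
    using PiE_ext[OF c(1,2)[unfolded A_def]] c(3) by auto
  then have "\<exists>i\<le>k. d i \<noteq> 0"
    by (auto simp: d_def)
  moreover have "\<forall>i\<le>k. \<bar>d i\<bar> \<le> B"
    using c(1,2) by (force simp: A_def d_def PiE_iff)
  moreover have "(\<Sum>i\<le>k. d i * z i) = 0"
    using c(4) by (simp add: d_def f_def left_diff_distrib sum_subtractf)
  ultimately show ?thesis
    by blast
qed

definition has_approximation :: "nat \<Rightarrow> real \<Rightarrow> real \<Rightarrow> real \<Rightarrow> bool" where
  "has_approximation n \<xi> X \<delta> \<longleftrightarrow>
     (\<exists>(x0 :: int) (x :: nat \<Rightarrow> int). 0 < \<bar>x0\<bar> \<and> real_of_int \<bar>x0\<bar> \<le> X \<and>
        (\<forall>m\<in>{1..n}. \<bar>real_of_int x0 * \<xi> ^ m - real_of_int (x m)\<bar> \<le> \<delta>))"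

lemma has_approximation_mono:
  assumes "has_approximation n \<xi> X \<delta>" and "X \<le> X'" and "\<delta> \<le> \<delta>'"
  shows "has_approximation n \<xi> X' \<delta>'"
proof -
  obtain x0 x where "0 < \<bar>x0\<bar>" "real_of_int \<bar>x0\<bar> \<le> X"
    and "\<forall>m\<in>{1..n}. \<bar>real_of_int x0 * \<xi> ^ m - real_of_int (x m)\<bar> \<le> \<delta>"
    using assms(1) unfolding has_approximation_def by blast
  then show ?thesis
    unfolding has_approximation_def using assms(2,3)
    by (intro exI[of _ x0] exI[of _ x]) force
qed

lemma abs_power_le_max_one_power:
  fixes \<xi> :: real
  assumes "i \<le> n"
  shows "\<bar>\<xi>\<bar> ^ i \<le> max 1 \<bar>\<xi>\<bar> ^ n"
  using assms by (intro order_trans[OF power_mono power_increasing]) auto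

lemma abs_value_le_of_relation:
  fixes a b :: "nat \<Rightarrow> real" and c \<xi> A \<delta> :: real
  assumes "(\<Sum>i\<in>I. a i * b i) = 0" and "\<forall>i\<in>I. \<bar>a i\<bar> \<le> A"
    and "\<forall>i\<in>I. \<bar>c * \<xi> ^ i - b i\<bar> \<le> \<delta>"
  shows "\<bar>c * (\<Sum>i\<in>I. a i * \<xi> ^ i)\<bar> \<le> card I * (A * \<delta>)"
proof -
  have "c * (\<Sum>i\<in>I. a i * \<xi> ^ i) = (\<Sum>i\<in>I. a i * (c * \<xi> ^ i - b i))"
    using assms(1) by (simp add: sum_distrib_left right_diff_distrib sum_subtractf ac_simps)
  then show ?thesis
    using abs_sum_mult_le[OF assms(2,3)] by simp
qed

lemma shifted_relation_identity:
  fixes a b :: "nat \<Rightarrow> real" and c \<xi> :: real and s D :: nat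
  shows "a D * c * \<xi> ^ (s + D) + (\<Sum>i<D. a i * b (s + i))
    = \<xi> ^ s * (c * (\<Sum>i\<le>D. a i * \<xi> ^ i)) - (\<Sum>i<D. a i * (c * \<xi> ^ (s + i) - b (s + i)))"
proof -
  have "\<xi> ^ s * (c * (\<Sum>i\<le>D. a i * \<xi> ^ i)) = (\<Sum>i\<le>D. a i * c * \<xi> ^ (s + i))"
    by (simp add: sum_distrib_left power_add ac_simps)
  also have "\<dots> = (\<Sum>i<D. a i * c * \<xi> ^ (s + i)) + a D * c * \<xi> ^ (s + D)"
    by (simp add: lessThan_Suc_atMost[symmetric])
  finally show ?thesis
    by (simp add: right_diff_distrib sum_subtractf ac_simps)
qed

lemma abs_shifted_relation_le:
  fixes a b :: "nat \<Rightarrow> real" and c \<xi> A \<delta> :: real and k D :: nat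
  assumes "D \<le> k" and rel: "(\<Sum>i\<le>D. a i * b i) = 0" and height: "\<forall>i\<le>D. \<bar>a i\<bar> \<le> A"
    and approx: "\<forall>i\<le>k. \<bar>c * \<xi> ^ i - b i\<bar> \<le> \<delta>"
  shows "\<bar>a D * c * \<xi> ^ (k + 1) + (\<Sum>i<D. a i * b (k + 1 - D + i))\<bar>
    \<le> ((k + 1) * max 1 \<bar>\<xi>\<bar> ^ (k + 1) + k) * (A * \<delta>)"
proof -
  define s where "s = k + 1 - D"
  define P where "P = (\<Sum>i\<le>D. a i * \<xi> ^ i)"
  have "0 \<le> \<delta>" and "0 \<le> A"
    using approx height by force+
  have "\<bar>c * P\<bar> \<le> card {..D} * (A * \<delta>)"
    unfolding P_def using height approx \<open>D \<le> k\<close> by (intro abs_value_le_of_relation[OF rel]) auto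
  also have "\<dots> \<le> (k + 1) * (A * \<delta>)"
    using \<open>D \<le> k\<close> \<open>0 \<le> \<delta>\<close> \<open>0 \<le> A\<close> by (intro mult_right_mono) simp_all
  finally have P_small: "\<bar>c * P\<bar> \<le> (k + 1) * (A * \<delta>)" .
  have "\<bar>\<xi>\<bar> ^ s \<le> max 1 \<bar>\<xi>\<bar> ^ (k + 1)"
    unfolding s_def by (rule abs_power_le_max_one_power) simp
  with P_small have head: "\<bar>\<xi> ^ s * (c * P)\<bar> \<le> max 1 \<bar>\<xi>\<bar> ^ (k + 1) * ((k + 1) * (A * \<delta>))"
    unfolding abs_mult[of "\<xi> ^ s"] power_abs by (intro mult_mono) auto
  have "\<forall>i\<in>{..<D}. \<bar>a i\<bar> \<le> A" and "\<forall>i\<in>{..<D}. \<bar>c * \<xi> ^ (s + i) - b (s + i)\<bar> \<le> \<delta>"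
    using height approx \<open>D \<le> k\<close> by (auto simp: s_def)
  from abs_sum_mult_le[OF this]
  have tail: "\<bar>\<Sum>i<D. a i * (c * \<xi> ^ (s + i) - b (s + i))\<bar> \<le> k * (A * \<delta>)"
    using \<open>D \<le> k\<close> \<open>0 \<le> \<delta>\<close> \<open>0 \<le> A\<close> by (simp add: mult_right_mono order_trans)
  have "a D * c * \<xi> ^ (k + 1) + (\<Sum>i<D. a i * b (k + 1 - D + i))
      = \<xi> ^ s * (c * P) - (\<Sum>i<D. a i * (c * \<xi> ^ (s + i) - b (s + i)))"
    using shifted_relation_identity[of a D c \<xi> s b] \<open>D \<le> k\<close> by (simp add: s_def P_def)
  also have "\<bar>\<dots>\<bar> \<le> max 1 \<bar>\<xi>\<bar> ^ (k + 1) * ((k + 1) * (A * \<delta>)) + k * (A * \<delta>)"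
    using head tail by (rule abs_triangle_ineq4[THEN order_trans, OF add_mono])
  also have "\<dots> = ((k + 1) * max 1 \<bar>\<xi>\<bar> ^ (k + 1) + k) * (A * \<delta>)"
    by (simp add: algebra_simps)
  finally show ?thesis .
qed

text \<open>The new coordinates are \<open>d\<^sub>D z\<^sub>m\<close> for \<open>m \<le> k\<close> and, for \<open>m = k + 1\<close>, the integer
  combination of the \<open>z\<^sub>i\<close> read off from \<open>\<xi>\<^bsup>k+1-D\<^esup> P(\<xi>) \<approx> 0\<close>, where \<open>P = \<Sum> d\<^sub>i t\<^sup>i\<close>
  has degree \<open>D\<close>.\<close>
lemma has_approximation_Suc_of_relation:
  fixes \<xi> \<delta> :: real and k B :: nat and z d :: "nat \<Rightarrow> int"
  assumes z0: "z 0 \<noteq> 0"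
    and approx: "\<forall>i\<le>k. \<bar>z 0 * \<xi> ^ i - z i\<bar> \<le> \<delta>"
    and rel_nontrivial: "\<exists>i\<le>k. d i \<noteq> 0" and rel_height: "\<forall>i\<le>k. \<bar>d i\<bar> \<le> B"
    and rel: "(\<Sum>i\<le>k. d i * z i) = 0"
  shows "has_approximation (k + 1) \<xi> (B * \<bar>z 0\<bar>) (((k + 1) * max 1 \<bar>\<xi>\<bar> ^ (k + 1) + k) * B * \<delta>)"
proof -
  define K where "K = (k + 1) * max 1 \<bar>\<xi>\<bar> ^ (k + 1) + k"
  have "0 \<le> \<delta>"
    using approx by force
  have "1 \<le> K"
  proof -
    have "1 * 1 \<le> real (k + 1) * max 1 \<bar>\<xi>\<bar> ^ (k + 1)"
      by (intro mult_mono one_le_power) auto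
    then show ?thesis
      unfolding K_def by simp
  qed
  have B_bound: "\<forall>i\<le>k. \<bar>real_of_int (d i)\<bar> \<le> B"
    using rel_height by (metis of_int_abs of_int_le_iff of_int_of_nat_eq)
  obtain D where D: "D \<le> k" "d D \<noteq> 0" and above_D: "\<And>i. i \<le> k \<Longrightarrow> d i \<noteq> 0 \<Longrightarrow> i \<le> D"
    using Nat.ex_has_greatest_nat[of "\<lambda>i. i \<le> k \<and> d i \<noteq> 0" _ k] rel_nontrivial by blast
  have rel_D: "(\<Sum>i\<le>D. real_of_int (d i) * z i) = 0"
  proof -
    have "(\<Sum>i\<le>k. d i * z i) = (\<Sum>i\<le>D. d i * z i)"
      using D(1) above_D by (intro sum.mono_neutral_right) auto
    then have "(\<Sum>i\<le>D. d i * z i) = 0"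
      using rel by simp
    then show ?thesis
      by (simp flip: of_int_mult of_int_sum)
  qed
  define y0 where "y0 = d D * z 0"
  define y where "y m = (if m \<le> k then d D * z m else - (\<Sum>i<D. d i * z (k + 1 - D + i)))" for m
  have "\<bar>y0 * \<xi> ^ m - y m\<bar> \<le> K * (B * \<delta>)" if "m \<in> {1..k + 1}" for m
  proof (cases "m \<le> k")
    case True
    have "\<bar>y0 * \<xi> ^ m - y m\<bar> = \<bar>d D\<bar> * \<bar>z 0 * \<xi> ^ m - z m\<bar>"
      using True by (simp add: y0_def y_def abs_mult[symmetric] algebra_simps)
    also have "\<dots> \<le> B * \<delta>"
      using approx B_bound True D(1) by (intro mult_mono) auto
    also have "\<dots> \<le> K * (B * \<delta>)"
      using mult_right_mono[OF \<open>1 \<le> K\<close>, of "B * \<delta>"] \<open>0 \<le> \<delta>\<close> by simp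
    finally show ?thesis .
  next
    case False
    have height_D: "\<forall>i\<le>D. \<bar>real_of_int (d i)\<bar> \<le> B"
      using B_bound D(1) by auto
    have "m = k + 1"
      using that False by simp
    then show ?thesis
      using abs_shifted_relation_le[OF D(1) rel_D height_D approx]
      by (simp add: y0_def y_def K_def ac_simps)
  qed
  moreover have "0 < \<bar>y0\<bar>"
    using D(2) z0 by (simp add: y0_def)
  moreover have "real_of_int \<bar>y0\<bar> \<le> B * real_of_int \<bar>z 0\<bar>"
  proof -
    have "\<bar>y0\<bar> \<le> B * \<bar>z 0\<bar>"
      using D(1) rel_height by (simp add: y0_def abs_mult mult_right_mono)
    then show ?thesis
      by (metis of_int_le_iff of_int_mult of_int_of_nat_eq)
  qed
  ultimately show ?thesis
    unfolding has_approximation_def K_def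
    by (intro exI[of _ y0] exI[of _ y]) (auto simp: mult.assoc simp flip: of_int_abs)
qed

lemma has_approximation_Suc:
  fixes \<xi> X \<delta> :: real and k B :: nat
  assumes "k \<ge> 1" and approx: "has_approximation k \<xi> X \<delta>" and "\<delta> \<le> X"
    and height: "2 * (k + 1) * ((max 1 \<bar>\<xi>\<bar> ^ k + 1) * X) + 1 \<le> real B ^ k"
  shows "has_approximation (k + 1) \<xi> (B * X) (((k + 1) * max 1 \<bar>\<xi>\<bar> ^ (k + 1) + k) * B * \<delta>)"
proof -
  define R where "R = max 1 \<bar>\<xi>\<bar>"
  obtain x0 x where x0: "0 < \<bar>x0\<bar>" "real_of_int \<bar>x0\<bar> \<le> X"
    and err: "\<forall>m\<in>{1..k}. \<bar>real_of_int x0 * \<xi> ^ m - real_of_int (x m)\<bar> \<le> \<delta>"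
    using approx unfolding has_approximation_def by blast
  define z where "z i = (if i = 0 then x0 else x i)" for i
  have \<delta>_nonneg: "0 \<le> \<delta>"
    using err \<open>k \<ge> 1\<close> by (meson abs_ge_zero atLeastAtMost_iff order_trans order_refl)
  have z_approx: "\<forall>i\<le>k. \<bar>z 0 * \<xi> ^ i - z i\<bar> \<le> \<delta>"
    using err \<delta>_nonneg by (simp add: z_def)
  have z_bound: "\<forall>i\<le>k. \<bar>z i\<bar> \<le> (R ^ k + 1) * X"
  proof (intro allI impI)
    fix i assume "i \<le> k"
    have "\<bar>x0 * \<xi> ^ i\<bar> \<le> X * R ^ k"
    proof -
      have "\<bar>\<xi>\<bar> ^ i \<le> R ^ k"
        unfolding R_def using \<open>i \<le> k\<close> by (rule abs_power_le_max_one_power)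
      with x0(2) show ?thesis
        unfolding abs_mult power_abs by (intro mult_mono) auto
    qed
    moreover have "\<bar>z 0 * \<xi> ^ i - z i\<bar> \<le> X"
      using z_approx \<open>i \<le> k\<close> \<open>\<delta> \<le> X\<close> by force
    ultimately show "\<bar>z i\<bar> \<le> (R ^ k + 1) * X"
      by (simp add: z_def algebra_simps split: if_splits)
  qed
  obtain d :: "nat \<Rightarrow> int" where "\<exists>i\<le>k. d i \<noteq> 0" "\<forall>i\<le>k. \<bar>d i\<bar> \<le> B" "(\<Sum>i\<le>k. d i * z i) = 0"
    using siegel_lemma[OF \<open>k \<ge> 1\<close> z_bound height[folded R_def]] by blast
  from has_approximation_Suc_of_relation[OF _ z_approx this]
  have "has_approximation (k + 1) \<xi> (B * \<bar>z 0\<bar>) (((k + 1) * R ^ (k + 1) + k) * B * \<delta>)"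
    using x0(1) by (simp add: z_def R_def)
  then show ?thesis
    by (rule has_approximation_mono) (use x0 in \<open>simp_all add: z_def R_def mult_left_mono\<close>)
qed

lemma nat_root_ceiling_bounds:
  fixes v :: real and k :: nat
  assumes "1 \<le> v" and "k \<ge> 1"
  obtains B :: nat where "v \<le> real B ^ k" and "1 \<le> B" and "real B \<le> v powr (1 / k) + 1"
proof
  define B where "B = nat \<lceil>v powr (1 / k)\<rceil>"
  have root_le_B: "v powr (1 / k) \<le> B"
    unfolding B_def by linarith
  have "v = (v powr (1 / k)) ^ k"
    using assms by (simp add: powr_realpow[symmetric] powr_powr)
  also have "\<dots> \<le> real B ^ k"
    using root_le_B by (intro power_mono) auto
  finally show "v \<le> real B ^ k" .
  show "1 \<le> B"
    using root_le_B ge_one_powr_ge_zero[OF assms(1), of "1 / k"] by simp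
  show "real B \<le> v powr (1 / k) + 1"
    unfolding B_def by (simp add: of_nat_nat)
qed

lemma powr_height_tradeoff:
  fixes K B C X lam \<mu> :: real and k :: nat
  assumes "0 \<le> K" and "1 \<le> B" and "0 < X" and B_le: "B \<le> C * X powr (1 / k)" and "-1 \<le> \<mu>"
  shows "K * B * X powr - lam \<le> K * C powr (1 + \<mu>) * X powr ((1 + \<mu>) / k + \<mu> - lam) * (B * X) powr - \<mu>"
proof -
  have "0 < C * X powr (1 / k)"
    using assms(2) B_le by linarith
  then have "0 < C"
    using assms(3) by (simp add: zero_less_mult_iff)
  have B_split: "B powr (1 + \<mu>) * B powr - \<mu> = B"
    using assms(2) by (simp flip: powr_add)
  have X_split: "X powr (\<mu> - lam) * X powr - \<mu> = X powr - lam"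
    by (simp flip: powr_add)
  have "K * B * X powr - lam = K * (B powr (1 + \<mu>) * B powr - \<mu>) * (X powr (\<mu> - lam) * X powr - \<mu>)"
    unfolding B_split X_split ..
  also have "\<dots> = K * B powr (1 + \<mu>) * X powr (\<mu> - lam) * (B * X) powr - \<mu>"
    using assms(2,3) by (simp add: powr_mult ac_simps)
  also have "\<dots> \<le> K * (C * X powr (1 / k)) powr (1 + \<mu>) * X powr (\<mu> - lam) * (B * X) powr - \<mu>"
    using assms by (intro mult_right_mono mult_left_mono powr_mono2) auto
  also have "\<dots> = K * C powr (1 + \<mu>) * X powr ((1 + \<mu>) / k + \<mu> - lam) * (B * X) powr - \<mu>"
    using \<open>0 < C\<close> assms(3) by (simp add: powr_mult powr_powr add_diff_eq flip: powr_add)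
  finally show ?thesis .
qed

definition approx_exponents :: "nat \<Rightarrow> real \<Rightarrow> real set" where
  "approx_exponents n \<xi> = {lam. \<forall>X0. \<exists>X\<ge>X0. X > 0 \<and> has_approximation n \<xi> X (X powr - lam)}"

lemma unif_lambda_eq_Sup_approx_exponents:
  "unif_lambda n \<xi> = Sup (ereal ` approx_exponents n \<xi>)"
  unfolding unif_lambda_def approx_exponents_def has_approximation_def ..

lemma zero_mem_approx_exponents: "0 \<in> approx_exponents n \<xi>"
proof -
  have approx: "has_approximation n \<xi> X 1" if "1 \<le> X" for X
  proof -
    have "\<bar>1 * \<xi> ^ m - real_of_int (round (\<xi> ^ m))\<bar> \<le> 1" for m
      using of_int_round_abs_le[of "\<xi> ^ m"] by (simp add: abs_minus_commute)
    then show ?thesis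
      unfolding has_approximation_def using that
      by (intro exI[of _ 1] exI[of _ "\<lambda>m. round (\<xi> ^ m)"]) simp
  qed
  show ?thesis
    unfolding approx_exponents_def
  proof (intro CollectI allI)
    fix X0 :: real
    show "\<exists>X\<ge>X0. X > 0 \<and> has_approximation n \<xi> X (X powr - 0)"
      using approx[of "max X0 1"] by (intro exI[of _ "max X0 1"]) auto
  qed
qed

lemma unif_lambda_nonneg: "0 \<le> unif_lambda n \<xi>"
  unfolding unif_lambda_eq_Sup_approx_exponents zero_ereal_def
  using zero_mem_approx_exponents by (rule SUP_upper)

lemma has_approximation_Suc_uniform:
  fixes \<xi> :: real and k :: nat
  assumes "k \<ge> 1"
  shows "\<exists>(C :: real) (K :: real). 0 \<le> K \<and> (\<forall>(X :: real) (\<delta> :: real). 1 \<le> X \<longrightarrow> \<delta> \<le> X \<longrightarrow>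
           has_approximation k \<xi> X \<delta> \<longrightarrow>
           (\<exists>B :: nat. 1 \<le> B \<and> real B \<le> C * X powr (1 / k) \<and>
              has_approximation (k + 1) \<xi> (real B * X) (K * real B * \<delta>)))"
proof -
  define R where "R = max 1 \<bar>\<xi>\<bar>"
  define c where "c = 2 * (k + 1) * (R ^ k + 1) + 1"
  have "1 \<le> R"
    by (simp add: R_def)
  then have K_nonneg: "0 \<le> (k + 1) * R ^ (k + 1) + k" and "1 \<le> c"
    by (simp_all add: c_def)
  show ?thesis
  proof (rule exI[of _ "c powr (1 / k) + 1"], rule exI[of _ "(k + 1) * R ^ (k + 1) + k"],
      intro conjI K_nonneg allI impI)
    fix X \<delta> :: real
    assume "1 \<le> X" and "\<delta> \<le> X" and approx: "has_approximation k \<xi> X \<delta>"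
    define v where "v = 2 * (k + 1) * ((R ^ k + 1) * X) + 1"
    have "1 \<le> v"
      using \<open>1 \<le> X\<close> \<open>1 \<le> R\<close> by (simp add: v_def)
    then obtain B :: nat where B: "v \<le> real B ^ k" "1 \<le> B" "real B \<le> v powr (1 / k) + 1"
      using nat_root_ceiling_bounds \<open>k \<ge> 1\<close> by blast
    have "real B \<le> (c powr (1 / k) + 1) * X powr (1 / k)"
    proof -
      have "v \<le> c * X"
        using \<open>1 \<le> X\<close> by (simp add: v_def c_def algebra_simps)
      then have "v powr (1 / k) \<le> c powr (1 / k) * X powr (1 / k)"
        using \<open>1 \<le> v\<close> \<open>1 \<le> c\<close> \<open>1 \<le> X\<close> by (simp add: powr_mono2 flip: powr_mult)
      moreover have "1 \<le> X powr (1 / k)"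
        using \<open>1 \<le> X\<close> by (simp add: ge_one_powr_ge_zero)
      ultimately show ?thesis
        using B(3) by (simp add: algebra_simps)
    qed
    moreover have "has_approximation (k + 1) \<xi> (B * X) (((k + 1) * R ^ (k + 1) + k) * B * \<delta>)"
      using has_approximation_Suc[OF \<open>k \<ge> 1\<close> approx \<open>\<delta> \<le> X\<close>] B(1) by (simp add: v_def R_def)
    ultimately show "\<exists>B :: nat. 1 \<le> B \<and> real B \<le> (c powr (1 / k) + 1) * X powr (1 / k) \<and>
        has_approximation (k + 1) \<xi> (B * X) (((k + 1) * R ^ (k + 1) + k) * B * \<delta>)"
      using B(2) by blast
  qed
qed

lemma approx_exponents_Suc:
  fixes \<xi> lam \<mu> :: real and k :: nat
  assumes "k \<ge> 1" and lam: "lam \<in> approx_exponents k \<xi>" and "-1 \<le> lam"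
    and "-1 \<le> \<mu>" and \<mu>_less: "\<mu> < (k * lam - 1) / (k + 1)"
  shows "\<mu> \<in> approx_exponents (k + 1) \<xi>"
proof -
  obtain C K where "0 \<le> K" and step:
    "\<forall>(X :: real) (\<delta> :: real). 1 \<le> X \<longrightarrow> \<delta> \<le> X \<longrightarrow> has_approximation k \<xi> X \<delta> \<longrightarrow>
       (\<exists>B :: nat. 1 \<le> B \<and> real B \<le> C * X powr (1 / k) \<and>
          has_approximation (k + 1) \<xi> (real B * X) (K * real B * \<delta>))"
    using has_approximation_Suc_uniform[OF \<open>k \<ge> 1\<close>, of \<xi>] by iprover
  define ex where "ex = (1 + \<mu>) / k + \<mu> - lam"
  define G where "G = K * C powr (1 + \<mu>)"
  have "ex < 0"
  proof -
    have "(1 + \<mu>) + k * \<mu> - k * lam < 0"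
      using \<mu>_less by (simp add: field_simps)
    then show ?thesis
      using \<open>k \<ge> 1\<close> by (simp add: ex_def field_simps)
  qed
  then have "((\<lambda>X. G * X powr ex) \<longlongrightarrow> 0) at_top"
    by (intro tendsto_mult_right_zero tendsto_neg_powr filterlim_ident)
  then have "eventually (\<lambda>X. G * X powr ex < 1) at_top"
    by (rule order_tendstoD) simp
  then obtain X1 where X1: "\<And>X. X1 \<le> X \<Longrightarrow> G * X powr ex < 1"
    unfolding eventually_at_top_linorder by blast
  have "0 \<le> G"
    using \<open>0 \<le> K\<close> by (simp add: G_def)
  show ?thesis
    unfolding approx_exponents_def
  proof (intro CollectI allI)
    fix Y0 :: real
    obtain X where X: "max (max X1 Y0) 1 \<le> X" and approx: "has_approximation k \<xi> X (X powr - lam)"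
      using lam unfolding approx_exponents_def by blast
    have "X powr - lam \<le> X"
      using X \<open>-1 \<le> lam\<close> powr_mono[of "- lam" 1 X] by simp
    then obtain B :: nat where B: "1 \<le> B" "B \<le> C * X powr (1 / k)"
      and approx': "has_approximation (k + 1) \<xi> (B * X) (K * B * X powr - lam)"
      using step[rule_format, OF _ _ approx] X by auto
    have "K * B * X powr - lam \<le> G * X powr ex * (B * X) powr - \<mu>"
      unfolding G_def ex_def using powr_height_tradeoff[OF \<open>0 \<le> K\<close> _ _ B(2) \<open>-1 \<le> \<mu>\<close>] B(1) X
      by simp
    also have "\<dots> \<le> (B * X) powr - \<mu>"
      using X1[of X] X \<open>0 \<le> G\<close> by (intro mult_left_le_one_le) auto
    finally have "has_approximation (k + 1) \<xi> (B * X) ((B * X) powr - \<mu>)"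
      by (rule has_approximation_mono[OF approx' order_refl])
    moreover have "X \<le> real B * X"
      using X B(1) by (simp add: mult_le_cancel_right1)
    then have "Y0 \<le> real B * X" and "0 < real B * X"
      using X by linarith+
    ultimately show "\<exists>Y\<ge>Y0. Y > 0 \<and> has_approximation (k + 1) \<xi> Y (Y powr - \<mu>)"
      by blast
  qed
qed

lemma unif_lambda_Suc_ge_approx_exponent:
  fixes \<xi> lam :: real and k :: nat
  assumes "k \<ge> 1" and lam: "lam \<in> approx_exponents k \<xi>" and "0 \<le> lam"
  shows "ereal ((k * lam - 1) / (k + 1)) \<le> unif_lambda (k + 1) \<xi>"
proof (rule dense_le)
  fix x :: ereal
  assume x_less: "x < ereal ((k * lam - 1) / (k + 1))"
  show "x \<le> unif_lambda (k + 1) \<xi>"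
  proof (cases "x \<le> 0")
    case True
    then show ?thesis
      using unif_lambda_nonneg by (rule order_trans)
  next
    case False
    with x_less obtain \<mu> where "x = ereal \<mu>" "0 < \<mu>" "\<mu> < (k * lam - 1) / (k + 1)"
      by (cases x) auto
    then have "\<mu> \<in> approx_exponents (k + 1) \<xi>"
      using approx_exponents_Suc[OF \<open>k \<ge> 1\<close> lam] \<open>0 \<le> lam\<close> by simp
    then show ?thesis
      unfolding \<open>x = ereal \<mu>\<close> unif_lambda_eq_Sup_approx_exponents by (rule SUP_upper)
  qed
qed

lemma unif_lambda_Suc_ge:
  fixes \<xi> :: real and k :: nat
  assumes "k \<ge> 1"
  shows "ereal (real k) * (1 + unif_lambda k \<xi>) \<le> ereal (real (k + 1)) * (1 + unif_lambda (k + 1) \<xi>)"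
proof (cases "unif_lambda (k + 1) \<xi>")
  case (real l')
  have "0 \<le> l'"
    using unif_lambda_nonneg[of "k + 1" \<xi>] real by simp
  have "lam \<le> ((k + 1) * (1 + l') - k) / k" if lam: "lam \<in> approx_exponents k \<xi>" for lam
  proof (cases "lam < 0")
    case True
    moreover have "0 \<le> ((k + 1) * (1 + l') - k) / k"
      using \<open>0 \<le> l'\<close> by (simp add: algebra_simps)
    ultimately show ?thesis
      by linarith
  next
    case False
    then have "(k * lam - 1) / (k + 1) \<le> l'"
      using unif_lambda_Suc_ge_approx_exponent[OF assms lam] real by simp
    then show ?thesis
      using assms by (simp add: field_simps)
  qed
  then have "unif_lambda k \<xi> \<le> ereal (((k + 1) * (1 + l') - k) / k)"
    unfolding unif_lambda_eq_Sup_approx_exponents by (intro SUP_least) simp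
  with unif_lambda_nonneg[of k \<xi>]
  obtain l where l: "unif_lambda k \<xi> = ereal l" "l \<le> ((k + 1) * (1 + l') - k) / k"
    by (cases "unif_lambda k \<xi>") auto
  then have "k * (1 + l) \<le> (k + 1) * (1 + l')"
    using assms by (simp add: field_simps)
  then show ?thesis
    using l(1) real by (simp add: add.commute)
qed (use unif_lambda_nonneg[of "k + 1" \<xi>] in simp_all)

lemma unif_lambda_weighted_mono:
  fixes \<xi> :: real and k n :: nat
  assumes "k \<ge> 1" and "k \<le> n"
  shows "ereal (real k) * (1 + unif_lambda k \<xi>) \<le> ereal (real n) * (1 + unif_lambda n \<xi>)"
  using assms(2)
proof (induction n rule: dec_induct)
  case base
  show ?case
    by simp
next
  case (step n)
  then show ?case
    using unif_lambda_Suc_ge[of n \<xi>] assms(1) by simp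
qed

lemma unif_lambda_lower_bound:
  fixes \<xi> :: real and k n :: nat
  assumes "k \<ge> 1" and "k \<le> n"
  shows "(ereal (real k) * unif_lambda k \<xi> - ereal (real n) + ereal (real k)) / ereal (real n)
           \<le> unif_lambda n \<xi>"
proof (cases "unif_lambda n \<xi>")
  case (real b)
  have weighted: "ereal (real k) * (1 + unif_lambda k \<xi>) \<le> ereal (real n) * (1 + ereal b)"
    using unif_lambda_weighted_mono[OF assms, of \<xi>] real by simp
  obtain a where a: "unif_lambda k \<xi> = ereal a"
    using weighted unif_lambda_nonneg[of k \<xi>] assms(1) by (cases "unif_lambda k \<xi>") auto
  have "k * a - n + k \<le> n * b"
    using weighted a by (simp add: algebra_simps)
  then show ?thesis
    using a real assms by (simp add: field_simps)
qed (use unif_lambda_nonneg[of n \<xi>] in simp_all)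

theorem theorem2p4:
  fixes \<xi> :: real and k :: nat
  assumes "transcendental_real \<xi>" and "k \<ge> 1"
  shows "ereal (real (k + 1)) * (1 + unif_lambda (k + 1) \<xi>)
           \<ge> ereal (real k) * (1 + unif_lambda k \<xi>) \<and>
         (\<forall>n::nat. n \<ge> k \<longrightarrow>
           unif_lambda n \<xi> \<ge>
             (ereal (real k) * unif_lambda k \<xi> - ereal (real n) + ereal (real k)) / ereal (real n))"
  using unif_lambda_Suc_ge[OF assms(2)] unif_lambda_lower_bound[OF assms(2)] by blast

end
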